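(* Let $D:\mathbb R^2\setminus\{0\}\to\mathbb R$ be nonnegative, bounded and continuously differentiable, and consider $\ddot x+D(x)\dot x=-x/|x|^3$, $x\in\mathbb R^2\setminus\{0\}$. Let $r_A,r_B,T>0$. There exists $M>0$ (depending only on $r_A,r_B,T$) such that every solution $x:[-T,0]\to\mathbb R^2\setminus\{0\}$ of this equation with $|x(-T)|=r_A$ and $|x(0)|=r_B$ satisfies $|\dot x(0)|<M$.
   Context: Solutions are twice continuously differentiable and avoid the origin. *)

theory Defs
  imports "HOL-Analysis.Analysis"
begin

definition admissible_friction :: "(real^2 \<Rightarrow> real) \<Rightarrow> bool" where
  "admissible_friction D \<longleftrightarrow>
     (\<forall>y. y \<noteq> 0 \<longrightarrow> D y \<ge> 0) \<and>
     (\<exists>B. \<forall>y. y \<noteq> 0 \<longrightarrow> \<bar>D y\<bar> \<le> B) \<and>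
     (\<exists>D' :: real^2 \<Rightarrow> ((real^2) \<Rightarrow>\<^sub>L real).
        (\<forall>y. y \<noteq> 0 \<longrightarrow> (D has_derivative blinfun_apply (D' y)) (at y)) \<and>
        continuous_on (- {0}) D')"

definition damped_kepler_solution ::
  "(real^2 \<Rightarrow> real) \<Rightarrow> real \<Rightarrow> real \<Rightarrow> (real \<Rightarrow> real^2) \<Rightarrow> (real \<Rightarrow> real^2) \<Rightarrow> (real \<Rightarrow> real^2) \<Rightarrow> bool" where
  "damped_kepler_solution D a b x v w \<longleftrightarrow>
     (\<forall>t\<in>{a..b}. x t \<noteq> 0) \<and>
     (\<forall>t\<in>{a..b}. (x has_vector_derivative v t) (at t within {a..b})) \<and>
     (\<forall>t\<in>{a..b}. (v has_vector_derivative w t) (at t within {a..b})) \<and>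
     continuous_on {a..b} w \<and>
     (\<forall>t\<in>{a..b}. w t + D (x t) *\<^sub>R v t = - (1 / norm (x t) ^ 3) *\<^sub>R x t)"

end

theory Submission
  imports Defs
begin

text \<open>Since \<open>D \<ge> 0\<close>, the energy \<open>|v|\<^sup>2/2 - 1/|x|\<close> does not increase along a solution.
  So if \<open>|v(0)|\<^sup>2 - 2/|x(0)| = \<sigma>\<^sup>2 > 0\<close>, then \<open>|v(t)|\<^sup>2 \<ge> \<sigma>\<^sup>2 + 2/|x(t)|\<close> on all of \<open>[-T, 0]\<close>.
  The component \<open>G = \<langle>x, v/|v|\<rangle>\<close> of the position along the velocity satisfies \<open>|G| \<le> |x|\<close>.
  In its derivative the friction terms cancel, and what is left is at least \<open>|v|/2 \<ge> \<sigma>/2\<close>.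
  Hence \<open>\<sigma> T \<le> 2 (r\<^sub>A + r\<^sub>B)\<close>, which bounds \<open>|v(0)|\<close> independently of \<open>D\<close>.\<close>

definition kepler_energy :: "'a::real_normed_vector \<Rightarrow> 'a \<Rightarrow> real" where
  "kepler_energy p q = (norm q)\<^sup>2 / 2 - 1 / norm p"

lemma increment_ge_of_derivative_ge:
  fixes f f' :: "real \<Rightarrow> real"
  assumes "a \<le> b" and "{a..b} \<subseteq> S"
    and "\<And>t. t \<in> {a..b} \<Longrightarrow> (f has_real_derivative f' t) (at t within S)"
    and "\<And>t. t \<in> {a..b} \<Longrightarrow> c \<le> f' t"
  shows "c * (b - a) \<le> f b - f a"
proof -
  have "(f has_derivative (*) (f' t)) (at t within {a..b})" if "t \<in> {a..b}" for t
    using DERIV_subset[OF assms(3)[OF that] assms(2)] by (simp add: has_field_derivative_def)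
  then obtain s where "s \<in> {a..b}" "f b - f a = f' s * (b - a)"
    using mvt_very_simple[OF assms(1), of f "\<lambda>t h. f' t * h"] by (auto simp: mult_commute_abs)
  then show ?thesis
    using assms(1,4) by (simp add: mult_right_mono)
qed

lemma has_real_derivative_norm_comp:
  fixes x :: "real \<Rightarrow> 'a::real_inner"
  assumes "(x has_vector_derivative v) (at t within S)" and "x t \<noteq> 0"
  shows "((\<lambda>t. norm (x t)) has_real_derivative inner (x t) v / norm (x t)) (at t within S)"
proof -
  have "((norm \<circ> x) has_derivative (\<lambda>h. inner (h *\<^sub>R v) (sgn (x t)))) (at t within S)"
    using diff_chain_within[OF assms(1)[unfolded has_vector_derivative_def]
        has_derivative_at_withinI[OF has_derivative_norm[OF assms(2)]]]
    by (simp add: o_def)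
  then show ?thesis
    unfolding has_field_derivative_def o_def
    by (rule has_derivative_eq_rhs)
      (simp add: fun_eq_iff sgn_div_norm inner_commute divide_inverse mult_ac)
qed

lemma has_real_derivative_inner_comp:
  fixes f g :: "real \<Rightarrow> 'a::real_inner"
  assumes "(f has_vector_derivative f') (at t within S)"
    and "(g has_vector_derivative g') (at t within S)"
  shows "((\<lambda>t. inner (f t) (g t)) has_real_derivative inner f' (g t) + inner (f t) g') (at t within S)"
  using has_derivative_inner[OF assms[unfolded has_vector_derivative_def]]
  unfolding has_field_derivative_def
  by (rule has_derivative_eq_rhs) (simp add: fun_eq_iff algebra_simps)

lemma kepler_energy_has_derivative:
  fixes x v :: "real \<Rightarrow> 'a::real_inner"
  assumes "(x has_vector_derivative v t) (at t within S)"
    and "(v has_vector_derivative - d *\<^sub>R v t - (1 / norm (x t) ^ 3) *\<^sub>R x t) (at t within S)"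
    and "x t \<noteq> 0"
  shows "((\<lambda>t. kepler_energy (x t) (v t)) has_real_derivative - d * (norm (v t))\<^sup>2) (at t within S)"
proof -
  define a where "a = - d *\<^sub>R v t - (1 / norm (x t) ^ 3) *\<^sub>R x t"
  have energy_eq: "(\<lambda>t. kepler_energy (x t) (v t)) = (\<lambda>t. inner (v t) (v t) / 2 - inverse (norm (x t)))"
    by (simp add: fun_eq_iff kepler_energy_def power2_norm_eq_inner inverse_eq_divide)
  have inner_a: "inner a (v t) = - d * (norm (v t))\<^sup>2 - inner (x t) (v t) / norm (x t) ^ 3"
    unfolding a_def by (simp add: inner_diff_left power2_norm_eq_inner)
  have "((\<lambda>t. inner (v t) (v t) / 2 - inverse (norm (x t))) has_real_derivative
      (inner a (v t) + inner (v t) a) / 2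
      - - (inverse (norm (x t)) * (inner (x t) (v t) / norm (x t)) * inverse (norm (x t))))
      (at t within S)"
    using assms(3)
    by (intro DERIV_diff DERIV_cdivide DERIV_inverse' has_real_derivative_inner_comp
        has_real_derivative_norm_comp assms(1) assms(2)[folded a_def]) auto
  moreover have "(inner a (v t) + inner (v t) a) / 2
      - - (inverse (norm (x t)) * (inner (x t) (v t) / norm (x t)) * inverse (norm (x t)))
      = - d * (norm (v t))\<^sup>2"
    by (subst inner_commute[of "v t" a])
      (simp add: inner_a power3_eq_cube inverse_eq_divide mult.assoc diff_divide_distrib)
  ultimately show ?thesis
    unfolding energy_eq by (rule DERIV_cong)
qed

text \<open>The friction coefficient \<open>d\<close> drops out: its contributions through \<open>\<langle>x, v'\<rangle>\<close> and through
  \<open>|v|'\<close> cancel.\<close>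

lemma position_along_velocity_has_derivative:
  fixes x v :: "real \<Rightarrow> 'a::real_inner"
  assumes "(x has_vector_derivative v t) (at t within S)"
    and "(v has_vector_derivative - d *\<^sub>R v t - (1 / norm (x t) ^ 3) *\<^sub>R x t) (at t within S)"
    and "x t \<noteq> 0" and "v t \<noteq> 0"
  shows "((\<lambda>t. inner (x t) (v t) / norm (v t)) has_real_derivative
      ((norm (v t))\<^sup>2 - 1 / norm (x t)) / norm (v t)
      + (inner (x t) (v t))\<^sup>2 / (norm (x t) ^ 3 * norm (v t) ^ 3)) (at t within S)"
proof -
  define a where "a = - d *\<^sub>R v t - (1 / norm (x t) ^ 3) *\<^sub>R x t"
  have inner_xa: "inner (x t) a = - d * inner (x t) (v t) - 1 / norm (x t)"
    using assms(3) unfolding a_def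
    by (simp add: inner_diff_right power2_norm_eq_inner[symmetric] power3_eq_cube power2_eq_square)
  have inner_va: "inner (v t) a = - d * (norm (v t))\<^sup>2 - inner (x t) (v t) / norm (x t) ^ 3"
    unfolding a_def by (simp add: inner_diff_right power2_norm_eq_inner inner_commute)
  have "((\<lambda>t. inner (x t) (v t) / norm (v t)) has_real_derivative
      ((inner (v t) (v t) + inner (x t) a) * norm (v t) - inner (x t) (v t) * (inner (v t) a / norm (v t)))
        / (norm (v t) * norm (v t))) (at t within S)"
    using assms(4)
    by (intro DERIV_divide has_real_derivative_inner_comp has_real_derivative_norm_comp
        assms(1) assms(2)[folded a_def]) auto
  moreover have "((inner (v t) (v t) + inner (x t) a) * norm (v t) - inner (x t) (v t) * (inner (v t) a / norm (v t)))
        / (norm (v t) * norm (v t))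
      = ((norm (v t))\<^sup>2 - 1 / norm (x t)) / norm (v t)
        + (inner (x t) (v t))\<^sup>2 / (norm (x t) ^ 3 * norm (v t) ^ 3)"
    using assms(3,4) unfolding inner_xa inner_va power2_norm_eq_inner[symmetric]
    by (simp add: field_simps power2_eq_square power3_eq_cube)
  ultimately show ?thesis
    by (rule DERIV_cong)
qed

lemma damped_kepler_solution_has_acceleration:
  assumes "damped_kepler_solution D a b x v w" and "t \<in> {a..b}"
  shows "(v has_vector_derivative - D (x t) *\<^sub>R v t - (1 / norm (x t) ^ 3) *\<^sub>R x t) (at t within {a..b})"
proof -
  have deriv: "(v has_vector_derivative w t) (at t within {a..b})"
    and equation: "w t + D (x t) *\<^sub>R v t = - (1 / norm (x t) ^ 3) *\<^sub>R x t"
    using assms unfolding damped_kepler_solution_def by blast+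
  from equation have "w t = - (1 / norm (x t) ^ 3) *\<^sub>R x t - D (x t) *\<^sub>R v t"
    by (metis add_diff_cancel_right')
  also have "\<dots> = - D (x t) *\<^sub>R v t - (1 / norm (x t) ^ 3) *\<^sub>R x t"
    by (simp add: algebra_simps)
  finally show ?thesis
    using deriv by simp
qed

lemma damped_kepler_energy_le:
  assumes sol: "damped_kepler_solution D a b x v w" and D_nonneg: "\<And>y. y \<noteq> 0 \<Longrightarrow> 0 \<le> D y"
    and t: "t \<in> {a..b}"
  shows "kepler_energy (x b) (v b) \<le> kepler_energy (x t) (v t)"
proof -
  have "0 * (b - t) \<le> - kepler_energy (x b) (v b) - - kepler_energy (x t) (v t)"
  proof (rule increment_ge_of_derivative_ge[where S = "{a..b}" and f = "\<lambda>s. - kepler_energy (x s) (v s)"])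
    fix s assume "s \<in> {t..b}"
    with t have s: "s \<in> {a..b}" by auto
    have nonzero: "x s \<noteq> 0" and x_deriv: "(x has_vector_derivative v s) (at s within {a..b})"
      using sol s unfolding damped_kepler_solution_def by auto
    show "((\<lambda>s. - kepler_energy (x s) (v s)) has_real_derivative - (- D (x s) * (norm (v s))\<^sup>2))
        (at s within {a..b})"
      by (intro DERIV_minus kepler_energy_has_derivative x_deriv nonzero
          damped_kepler_solution_has_acceleration[OF sol s])
    show "0 \<le> - (- D (x s) * (norm (v s))\<^sup>2)"
      using D_nonneg[OF nonzero] by simp
  qed (use t in auto)
  then show ?thesis by simp
qed

lemma damped_kepler_duration_bound:
  assumes sol: "damped_kepler_solution D a b x v w" and "a \<le> b" and "0 < \<sigma>"
    and speed_ge: "\<And>t. t \<in> {a..b} \<Longrightarrow> \<sigma>\<^sup>2 + 2 / norm (x t) \<le> (norm (v t))\<^sup>2"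
  shows "\<sigma> * (b - a) \<le> 2 * (norm (x a) + norm (x b))"
proof -
  define G where "G t = inner (x t) (v t) / norm (v t)" for t
  have "\<sigma> / 2 * (b - a) \<le> G b - G a"
  proof (rule increment_ge_of_derivative_ge[where S = "{a..b}"])
    fix t assume t: "t \<in> {a..b}"
    have "0 \<le> 2 / norm (x t)"
      by simp
    with speed_ge[OF t] have "\<sigma>\<^sup>2 \<le> (norm (v t))\<^sup>2" and potential_le: "2 / norm (x t) \<le> (norm (v t))\<^sup>2"
      using zero_le_power2[of \<sigma>] by linarith+
    then have "\<sigma> \<le> norm (v t)"
      by (auto intro: power2_le_imp_le)
    with \<open>0 < \<sigma>\<close> have "v t \<noteq> 0"
      by auto
    have x_deriv: "(x has_vector_derivative v t) (at t within {a..b})" and "x t \<noteq> 0"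
      using sol t unfolding damped_kepler_solution_def by auto
    show "(G has_real_derivative ((norm (v t))\<^sup>2 - 1 / norm (x t)) / norm (v t)
        + (inner (x t) (v t))\<^sup>2 / (norm (x t) ^ 3 * norm (v t) ^ 3)) (at t within {a..b})"
      unfolding G_def[abs_def]
      using position_along_velocity_has_derivative[OF x_deriv
          damped_kepler_solution_has_acceleration[OF sol t] \<open>x t \<noteq> 0\<close> \<open>v t \<noteq> 0\<close>] .
    have "\<sigma> / 2 \<le> norm (v t) / 2"
      using \<open>\<sigma> \<le> norm (v t)\<close> by simp
    also have "\<dots> \<le> ((norm (v t))\<^sup>2 - 1 / norm (x t)) / norm (v t)"
      using potential_le \<open>v t \<noteq> 0\<close> by (simp add: field_simps power2_eq_square)
    also have "\<dots> \<le> ((norm (v t))\<^sup>2 - 1 / norm (x t)) / norm (v t)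
        + (inner (x t) (v t))\<^sup>2 / (norm (x t) ^ 3 * norm (v t) ^ 3)"
      by simp
    finally show "\<sigma> / 2 \<le> \<dots>" .
  qed (use \<open>a \<le> b\<close> in auto)
  moreover have G_le: "\<bar>G t\<bar> \<le> norm (x t)" for t
    unfolding G_def using Cauchy_Schwarz_ineq2[of "x t" "v t"]
    by (cases "v t = 0") (simp_all add: abs_div divide_le_eq)
  ultimately have "\<sigma> / 2 * (b - a) \<le> norm (x a) + norm (x b)"
    using G_le[of a] G_le[of b] by linarith
  then show ?thesis
    by simp
qed

lemma damped_kepler_speed_bound:
  assumes sol: "damped_kepler_solution D a b x v w" and D_nonneg: "\<And>y. y \<noteq> 0 \<Longrightarrow> 0 \<le> D y"
    and "a < b"
  shows "(norm (v b))\<^sup>2 \<le> 2 / norm (x b) + (2 * (norm (x a) + norm (x b)) / (b - a))\<^sup>2"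
proof (cases "(norm (v b))\<^sup>2 \<le> 2 / norm (x b)")
  case True
  then show ?thesis
    by (simp add: add_increasing2)
next
  case False
  define \<sigma> where "\<sigma> = sqrt ((norm (v b))\<^sup>2 - 2 / norm (x b))"
  have "0 < \<sigma>"
    using False by (simp add: \<sigma>_def)
  moreover have "\<sigma>\<^sup>2 + 2 / norm (x t) \<le> (norm (v t))\<^sup>2" if "t \<in> {a..b}" for t
    using damped_kepler_energy_le[OF sol D_nonneg that] False
    by (simp add: \<sigma>_def kepler_energy_def)
  ultimately have "\<sigma> * (b - a) \<le> 2 * (norm (x a) + norm (x b))"
    using damped_kepler_duration_bound[OF sol] \<open>a < b\<close> by simp
  then have "\<sigma> \<le> 2 * (norm (x a) + norm (x b)) / (b - a)"
    using \<open>a < b\<close> by (simp add: field_simps)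
  then have "\<sigma>\<^sup>2 \<le> (2 * (norm (x a) + norm (x b)) / (b - a))\<^sup>2"
    using \<open>0 < \<sigma>\<close> by (simp add: power_mono)
  then show ?thesis
    using False by (simp add: \<sigma>_def)
qed

theorem proposition4p2:
  fixes rA rB T :: real
  assumes "rA > 0" and "rB > 0" and "T > 0"
  shows "\<exists>M>0. \<forall>D x v w. admissible_friction D \<longrightarrow>
           damped_kepler_solution D (-T) 0 x v w \<longrightarrow>
           norm (x (-T)) = rA \<longrightarrow> norm (x 0) = rB \<longrightarrow> norm (v 0) < M"
proof -
  define M where "M = sqrt (2 / rB + (2 * (rA + rB) / T)\<^sup>2) + 1"
  have "norm (v 0) < M"
    if "admissible_friction D" and sol: "damped_kepler_solution D (-T) 0 x v w"
      and "norm (x (-T)) = rA" and "norm (x 0) = rB" for D x v w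
  proof -
    have "\<And>y. y \<noteq> 0 \<Longrightarrow> 0 \<le> D y"
      using \<open>admissible_friction D\<close> unfolding admissible_friction_def by blast
    from damped_kepler_speed_bound[OF sol this] \<open>T > 0\<close> that(3,4)
    have "(norm (v 0))\<^sup>2 \<le> 2 / rB + (2 * (rA + rB) / T)\<^sup>2"
      by (simp add: add.commute)
    then show ?thesis
      unfolding M_def using real_le_rsqrt by fastforce
  qed
  moreover have "M > 0"
    unfolding M_def using \<open>rB > 0\<close> by (simp add: add_nonneg_pos)
  ultimately show ?thesis
    by blast
qed

end
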